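(* Let $k>500$, $\ln^3k/\sqrt k<\delta<1/100$, $d=300\lceil\ln k\rceil$, $\varepsilon=50\delta/\lceil\ln k\rceil$, and let $c^1,\dots,c^k\in G$ and $X$ be as in the context, and suppose they satisfy: (1) $\|c^i-c^j\|_2\ge\sqrt d/5$ for all $i\ne j$; and (2) for every path $\pi$ of length at most $\log_2k/4$, either $|F_{u(\pi)}|\le\sqrt k$, or every threshold cut that separates at least two data points of $X\cap u(\pi)$ damages at least $\varepsilon|F_{u(\pi)}|/2$ centers of $F_{u(\pi)}$. Then every threshold tree in which each leaf contains at most one of the centers $c^1,\dots,c^k$ has at least $2\delta k$ damaged centers, where a center $c^i$ is damaged by the tree if $c^i+\varepsilon\mathbf 1$ or $c^i-\varepsilon\mathbf 1$ lies in a different leaf from $c^i$.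
   Context: $G$ is the set of points of $[0,1]^d$ all of whose coordinates are nonnegative integer multiples of $\varepsilon$; $\mathbf{1}=(1,\dots,1)\in\mathbb{R}^d$. The data set (multiset) $X$ consists, for each $i$, of $k^2\lceil\ln^3k\rceil$ copies of $c^i$ together with $c^i+\varepsilon\mathbf{1}$ and $c^i-\varepsilon\mathbf{1}$. A threshold tree is a rooted binary tree of cells of $\mathbb{R}^d$ with root $\mathbb{R}^d$, each internal node $u$ split by a cut $(i,\xi)$ into $\{y\in u:y_i\le\xi\}$ and $\{y\in u:y_i>\xi\}$. A path $\pi$ is a finite sequence of triples $(i_j,\xi_j,\lambda_j)$ with $i_j\in\{1,\dots,d\}$, $\xi_j\in\mathbb{R}$, $\lambda_j\in\{\pm1\}$; its length is the number of triples; $u(\pi)$ is the set of $y$ with $y_{i_j}\le\xi_j$ when $\lambda_j=-1$ and $y_{i_j}>\xi_j$ when $\lambda_j=+1$, for all $j$. A center $c^i\in u(\pi)$ is damaged in $u(\pi)$ if $c^i\pm\varepsilon\mathbf 1\notin u(\pi)$ for some sign; $F_{u(\pi)}$ is the set of centers in $u(\pi)$ not damaged in $u(\pi)$. A cut $(i,\xi)$ separates two points if exactly one satisfies $y_i\le\xi$, and damages a center $c$ if it separates $c$ from $c+\varepsilon\mathbf1$ or from $c-\varepsilon\mathbf1$. *)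

theory Defs
  imports Complex_Main "HOL-Library.Multiset"
begin

text \<open>Points of R^d are represented as functions nat => real; coordinate i of the
paper (1 <= i <= d) is index i-1 < d.  Points of the grid have all coordinates
>= d equal to 0 (canonical representation).\<close>

type_synonym point = "nat \<Rightarrow> real"

definition grid :: "nat \<Rightarrow> real \<Rightarrow> point set" where
  "grid d eps = {x. (\<forall>j<d. 0 \<le> x j \<and> x j \<le> 1 \<and> (\<exists>m::nat. x j = real m * eps))
                   \<and> (\<forall>j\<ge>d. x j = 0)}"

definition shift :: "nat \<Rightarrow> real \<Rightarrow> point \<Rightarrow> point" where
  "shift d e x = (\<lambda>j. if j < d then x j + e else x j)"

definition dist2 :: "nat \<Rightarrow> point \<Rightarrow> point \<Rightarrow> real" where
  "dist2 d x y = sqrt (\<Sum>j<d. (x j - y j)^2)"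

text \<open>The data multiset X (centers indexed by 0..k-1).\<close>
definition data :: "nat \<Rightarrow> nat \<Rightarrow> real \<Rightarrow> (nat \<Rightarrow> point) \<Rightarrow> point multiset" where
  "data k d eps c = (\<Sum>i\<in>{..<k}. replicate_mset (k^2 * nat \<lceil>(ln (real k))^3\<rceil>) (c i)
        + {# shift d eps (c i), shift d (-eps) (c i) #})"

type_synonym path = "(nat \<times> real \<times> int) list"

definition valid_path :: "nat \<Rightarrow> path \<Rightarrow> bool" where
  "valid_path d p = (\<forall>(i,\<xi>,l)\<in>set p. i < d \<and> (l = -1 \<or> l = 1))"

definition ucell :: "path \<Rightarrow> point set" where
  "ucell p = {y. \<forall>(i,\<xi>,l)\<in>set p. (l = -1 \<longrightarrow> y i \<le> \<xi>) \<and> (l = 1 \<longrightarrow> y i > \<xi>)}"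

definition damaged_in :: "nat \<Rightarrow> real \<Rightarrow> point set \<Rightarrow> point \<Rightarrow> bool" where
  "damaged_in d eps u x = (x \<in> u \<and> (shift d eps x \<notin> u \<or> shift d (-eps) x \<notin> u))"

definition Fset :: "nat \<Rightarrow> nat \<Rightarrow> real \<Rightarrow> (nat \<Rightarrow> point) \<Rightarrow> point set \<Rightarrow> nat set" where
  "Fset k d eps c u = {i. i < k \<and> c i \<in> u \<and> \<not> damaged_in d eps u (c i)}"

definition separates :: "nat \<Rightarrow> real \<Rightarrow> point \<Rightarrow> point \<Rightarrow> bool" where
  "separates i \<xi> x y = ((x i \<le> \<xi>) \<noteq> (y i \<le> \<xi>))"

definition cut_damages :: "nat \<Rightarrow> real \<Rightarrow> nat \<Rightarrow> real \<Rightarrow> point \<Rightarrow> bool" where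
  "cut_damages d eps i \<xi> x = (separates i \<xi> x (shift d eps x) \<or> separates i \<xi> x (shift d (-eps) x))"

text \<open>Threshold trees: Node i xi l r splits a cell into y_i <= xi (left) and y_i > xi (right).\<close>
datatype ttree = Leaf | Node nat real ttree ttree

fun wf_tree :: "nat \<Rightarrow> ttree \<Rightarrow> bool" where
  "wf_tree d Leaf = True"
| "wf_tree d (Node i \<xi> l r) = (i < d \<and> wf_tree d l \<and> wf_tree d r)"

fun leaf_paths :: "ttree \<Rightarrow> path set" where
  "leaf_paths Leaf = {[]}"
| "leaf_paths (Node i \<xi> l r) = (\<lambda>p. (i,\<xi>,-1) # p) ` leaf_paths l \<union> (\<lambda>p. (i,\<xi>,1) # p) ` leaf_paths r"

definition leaf_cells :: "ttree \<Rightarrow> point set set" where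
  "leaf_cells t = ucell ` leaf_paths t"

definition tree_damaged :: "nat \<Rightarrow> real \<Rightarrow> ttree \<Rightarrow> point \<Rightarrow> bool" where
  "tree_damaged d eps t x = (\<exists>L\<in>leaf_cells t. x \<in> L \<and> (shift d eps x \<notin> L \<or> shift d (-eps) x \<notin> L))"

end

theory Submission
  imports Defs
begin

(* Call a center intact in a cell if it lies there together with its two shifts c +- eps 1.
   Every cut of a cell either leaves all data points on one side, or, as long as the cell is
   reached by a path of length at most log_2 k / 4 and holds more than s = sqrt k intact
   centers, damages at least an eps/2 fraction of them; the remaining intact centers are split
   between the two children.  Induction on the tree then shows, for a cell with depth budget r, the
   potential inequality
     eps (r |F| - (2^r - 1) s) <= (2 + eps r) |D|
   between its intact centers F and the intact centers D that the subtree damages.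
   At the root |F| = k and r ~ log_16 k, and the inequality forces |D| >= 2 delta k. *)

lemma ucell_Nil [simp]: "ucell [] = UNIV"
  by (simp add: ucell_def)

lemma ucell_Cons:
  "ucell ((i, \<xi>, l) # q) = {y. (l = -1 \<longrightarrow> y i \<le> \<xi>) \<and> (l = 1 \<longrightarrow> \<xi> < y i)} \<inter> ucell q"
  by (auto simp: ucell_def)

lemma ucell_append: "ucell (p @ q) = ucell p \<inter> ucell q"
  unfolding ucell_def set_append ball_Un by blast

lemma Int_ucell_Cons:
  "A \<inter> ucell ((i, \<xi>, -1) # q) = A \<inter> {y. y i \<le> \<xi>} \<inter> ucell q"
  "A \<inter> ucell ((i, \<xi>, 1) # q) = A \<inter> {y. \<xi> < y i} \<inter> ucell q"
  by (auto simp: ucell_Cons)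

lemma Int_ucell_snoc:
  "A \<inter> ucell (p @ [(i, \<xi>, -1)]) = A \<inter> ucell p \<inter> {y. y i \<le> \<xi>}"
  "A \<inter> ucell (p @ [(i, \<xi>, 1)]) = A \<inter> ucell p \<inter> {y. \<xi> < y i}"
  by (auto simp: ucell_append ucell_Cons)

lemma leaf_paths_cover: "\<exists>q\<in>leaf_paths t. y \<in> ucell q"
proof (induction t)
  case Leaf
  then show ?case by simp
next
  case (Node i \<xi> l r)
  then obtain ql qr where "ql \<in> leaf_paths l" "y \<in> ucell ql" "qr \<in> leaf_paths r" "y \<in> ucell qr"
    by blast
  show ?case
  proof (cases "y i \<le> \<xi>")
    case True
    then have "y \<in> ucell ((i, \<xi>, -1) # ql)"
      using \<open>y \<in> ucell ql\<close> by (simp add: ucell_Cons)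
    then show ?thesis
      using \<open>ql \<in> leaf_paths l\<close> by auto
  next
    case False
    then have "y \<in> ucell ((i, \<xi>, 1) # qr)"
      using \<open>y \<in> ucell qr\<close> by (simp add: ucell_Cons)
    then show ?thesis
      using \<open>qr \<in> leaf_paths r\<close> by auto
  qed
qed

lemma unseparated_cases:
  assumes "\<not> (\<exists>x\<in>A. \<exists>y\<in>A. separates i \<xi> x y)"
  shows "A \<subseteq> {y. y i \<le> \<xi>} \<or> A \<subseteq> {y. \<xi> < y i}"
  using assms unfolding separates_def subset_iff mem_Collect_eq not_le[symmetric] by blast

lemma Fset_eq:
  "Fset k d e c u = {j. j < k \<and> c j \<in> u \<and> shift d e (c j) \<in> u \<and> shift d (-e) (c j) \<in> u}"
  by (auto simp: Fset_def damaged_in_def)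

lemma finite_Fset [simp]: "finite (Fset k d e c u)"
  by (simp add: Fset_eq)

lemma Fset_Int_eq:
  assumes "\<forall>i<k. c i \<in> X \<and> shift d e (c i) \<in> X \<and> shift d (-e) (c i) \<in> X"
  shows "Fset k d e c (X \<inter> u) = Fset k d e c u"
  using assms by (auto simp: Fset_eq)

lemma card_Fset_le: "card (Fset k d e c A) \<le> card {i. i < k \<and> c i \<in> A}"
  by (rule card_mono) (auto simp: Fset_eq)

lemma card_Fset_cut:
  "card (Fset k d e c (A \<inter> {y. y i \<le> \<xi>})) + card (Fset k d e c (A \<inter> {y. \<xi> < y i}))
     + card {j \<in> Fset k d e c A. cut_damages d e i \<xi> (c j)} = card (Fset k d e c A)"
proof -
  let ?L = "Fset k d e c (A \<inter> {y. y i \<le> \<xi>})" and ?R = "Fset k d e c (A \<inter> {y. \<xi> < y i})"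
    and ?C = "{j \<in> Fset k d e c A. cut_damages d e i \<xi> (c j)}"
  have "?L \<inter> ?R = {}" "(?L \<union> ?R) \<inter> ?C = {}"
    by (auto simp: Fset_eq cut_damages_def separates_def)
  then have "card (?L \<union> ?R \<union> ?C) = card ?L + card ?R + card ?C"
    by (simp add: card_Un_disjoint)
  moreover have "?L \<union> ?R \<union> ?C = Fset k d e c A"
    by (auto simp: Fset_eq cut_damages_def separates_def)
  ultimately show ?thesis
    by simp
qed

definition tree_damaged_in :: "nat \<Rightarrow> real \<Rightarrow> ttree \<Rightarrow> point set \<Rightarrow> point \<Rightarrow> bool" where
  "tree_damaged_in d e t A x \<longleftrightarrow> (\<exists>q\<in>leaf_paths t. damaged_in d e (A \<inter> ucell q) x)"

definition damaged_centers ::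
    "nat \<Rightarrow> nat \<Rightarrow> real \<Rightarrow> (nat \<Rightarrow> point) \<Rightarrow> ttree \<Rightarrow> point set \<Rightarrow> nat set" where
  "damaged_centers k d e c t A = {j \<in> Fset k d e c A. tree_damaged_in d e t A (c j)}"

lemma finite_damaged_centers [simp]: "finite (damaged_centers k d e c t A)"
  by (simp add: damaged_centers_def)

lemma tree_damaged_in_empty [simp]: "\<not> tree_damaged_in d e t {} x"
  by (simp add: tree_damaged_in_def damaged_in_def)

lemma tree_damaged_in_Node:
  "tree_damaged_in d e (Node i \<xi> l r) A x \<longleftrightarrow>
     tree_damaged_in d e l (A \<inter> {y. y i \<le> \<xi>}) x \<or> tree_damaged_in d e r (A \<inter> {y. \<xi> < y i}) x"
proof -
  have bex_image: "(\<exists>q\<in>f ` Q. P q) \<longleftrightarrow> (\<exists>q\<in>Q. P (f q))" for f :: "path \<Rightarrow> path" and Q P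
    by blast
  show ?thesis
    unfolding tree_damaged_in_def leaf_paths.simps bex_Un bex_image Int_ucell_Cons ..
qed

lemma cut_damages_imp_tree_damaged_in:
  assumes "x \<in> A" and "cut_damages d e i \<xi> x"
  shows "tree_damaged_in d e (Node i \<xi> l r) A x"
proof (cases "x i \<le> \<xi>")
  case True
  obtain q where "q \<in> leaf_paths l" "x \<in> ucell q"
    using leaf_paths_cover by blast
  then have "tree_damaged_in d e l (A \<inter> {y. y i \<le> \<xi>}) x"
    using assms True by (auto simp: tree_damaged_in_def damaged_in_def cut_damages_def separates_def)
  then show ?thesis
    by (simp add: tree_damaged_in_Node)
next
  case False
  obtain q where "q \<in> leaf_paths r" "x \<in> ucell q"
    using leaf_paths_cover by blast
  then have "tree_damaged_in d e r (A \<inter> {y. \<xi> < y i}) x"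
    using assms False by (auto simp: tree_damaged_in_def damaged_in_def cut_damages_def separates_def)
  then show ?thesis
    by (simp add: tree_damaged_in_Node)
qed

lemma card_damaged_centers_Node:
  "card {j \<in> Fset k d e c A. cut_damages d e i \<xi> (c j)}
     + card (damaged_centers k d e c l (A \<inter> {y. y i \<le> \<xi>}))
     + card (damaged_centers k d e c r (A \<inter> {y. \<xi> < y i}))
   \<le> card (damaged_centers k d e c (Node i \<xi> l r) A)"
proof -
  let ?C = "{j \<in> Fset k d e c A. cut_damages d e i \<xi> (c j)}"
    and ?L = "damaged_centers k d e c l (A \<inter> {y. y i \<le> \<xi>})"
    and ?R = "damaged_centers k d e c r (A \<inter> {y. \<xi> < y i})"
  have "?C \<inter> ?L = {}" "(?C \<union> ?L) \<inter> ?R = {}"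
    by (auto simp: damaged_centers_def Fset_eq cut_damages_def separates_def)
  then have "card ?C + card ?L + card ?R = card (?C \<union> ?L \<union> ?R)"
    by (simp add: card_Un_disjoint damaged_centers_def)
  also have "\<dots> \<le> card (damaged_centers k d e c (Node i \<xi> l r) A)"
  proof (rule card_mono)
    have "?C \<subseteq> damaged_centers k d e c (Node i \<xi> l r) A"
      by (auto simp: damaged_centers_def Fset_eq intro: cut_damages_imp_tree_damaged_in)
    moreover have "?L \<union> ?R \<subseteq> damaged_centers k d e c (Node i \<xi> l r) A"
      by (auto simp: damaged_centers_def Fset_eq tree_damaged_in_Node)
    ultimately show "?C \<union> ?L \<union> ?R \<subseteq> damaged_centers k d e c (Node i \<xi> l r) A"
      by blast
  qed simp
  finally show ?thesis .
qed

lemma damaged_centers_Node_left: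
  assumes "A \<subseteq> {y. y i \<le> \<xi>}"
  shows "damaged_centers k d e c (Node i \<xi> l r) A = damaged_centers k d e c l A"
proof -
  have "A \<inter> {y. y i \<le> \<xi>} = A" "A \<inter> {y. \<xi> < y i} = {}"
    using assms by auto
  then show ?thesis
    by (simp add: damaged_centers_def tree_damaged_in_Node)
qed

lemma damaged_centers_Node_right:
  assumes "A \<subseteq> {y. \<xi> < y i}"
  shows "damaged_centers k d e c (Node i \<xi> l r) A = damaged_centers k d e c r A"
proof -
  have "A \<inter> {y. y i \<le> \<xi>} = {}" "A \<inter> {y. \<xi> < y i} = A"
    using assms by auto
  then show ?thesis
    by (simp add: damaged_centers_def tree_damaged_in_Node)
qed

lemma damaged_centers_subset_tree_damaged:
  assumes "\<forall>i<k. c i \<in> X \<and> shift d e (c i) \<in> X \<and> shift d (-e) (c i) \<in> X"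
  shows "damaged_centers k d e c t X \<subseteq> {i. i < k \<and> tree_damaged d e t (c i)}"
  using assms
  by (fastforce simp: damaged_centers_def tree_damaged_in_def tree_damaged_def leaf_cells_def
      damaged_in_def Fset_eq)

lemma potential_arith_small:
  fixes e s F D :: real and r :: nat
  assumes "0 \<le> e" "0 \<le> D" "0 \<le> F" "F \<le> s"
  shows "e * (r * F - (2 ^ r - 1) * s) \<le> (2 + e * r) * D"
proof -
  have "real r \<le> 2 ^ r - 1"
    using less_exp[of r] by (simp add: nat_less_real_le)
  then have "r * F \<le> (2 ^ r - 1) * s"
    using assms by (meson mult_mono of_nat_0_le_iff order.trans)
  then have "e * (r * F - (2 ^ r - 1) * s) \<le> 0"
    using assms(1) by (simp add: mult_nonneg_nonpos)
  also have "0 \<le> (2 + e * r) * D"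
    using assms by simp
  finally show ?thesis .
qed

lemma potential_arith_step:
  fixes e s F FL FR C D DL DR :: real and r :: nat
  assumes "0 \<le> e" "0 \<le> s" "0 \<le> D"
    and cut: "e * F \<le> 2 * C" and split: "FL + FR + C = F" and damaged: "C + DL + DR \<le> D"
    and left: "e * (r * FL - (2 ^ r - 1) * s) \<le> (2 + e * r) * DL"
    and right: "e * (r * FR - (2 ^ r - 1) * s) \<le> (2 + e * r) * DR"
  shows "e * (Suc r * F - (2 ^ Suc r - 1) * s) \<le> (2 + e * Suc r) * D"
proof -
  have "e * (Suc r * F - (2 ^ Suc r - 1) * s)
      = e * (r * FL - (2 ^ r - 1) * s) + e * (r * FR - (2 ^ r - 1) * s) + e * r * C + e * F - e * s"
    by (simp flip: split add: algebra_simps)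
  also have "\<dots> \<le> (2 + e * r) * DL + (2 + e * r) * DR + 2 * C + e * r * C"
    using left right cut mult_nonneg_nonneg[OF \<open>0 \<le> e\<close> \<open>0 \<le> s\<close>] by linarith
  also have "\<dots> = (2 + e * r) * (C + DL + DR)"
    by (simp add: algebra_simps)
  also have "\<dots> \<le> (2 + e * r) * D"
    using damaged assms(1) by (simp add: mult_left_mono)
  also have "\<dots> \<le> (2 + e * Suc r) * D"
    using assms(1,3) by (simp add: algebra_simps)
  finally show ?thesis .
qed

definition potential_bound ::
    "nat \<Rightarrow> nat \<Rightarrow> real \<Rightarrow> (nat \<Rightarrow> point) \<Rightarrow> real \<Rightarrow> ttree \<Rightarrow> point set \<Rightarrow> nat \<Rightarrow> bool" where
  "potential_bound k d e c s t A r \<longleftrightarrow>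
     e * (real r * real (card (Fset k d e c A)) - (2 ^ r - 1) * s)
       \<le> (2 + e * real r) * real (card (damaged_centers k d e c t A))"

lemma potential_bound_0: "potential_bound k d e c s t A 0"
  by (simp add: potential_bound_def)

lemma potential_bound_small_cell:
  assumes "0 \<le> e" "real (card (Fset k d e c A)) \<le> s"
  shows "potential_bound k d e c s t A r"
  unfolding potential_bound_def using assms by (intro potential_arith_small) auto

lemma potential_bound_Node_left:
  assumes "A \<subseteq> {y. y i \<le> \<xi>}" "potential_bound k d e c s l A r"
  shows "potential_bound k d e c s (Node i \<xi> l rt) A r"
  using assms by (simp add: potential_bound_def damaged_centers_Node_left)

lemma potential_bound_Node_right:
  assumes "A \<subseteq> {y. \<xi> < y i}" "potential_bound k d e c s rt A r"
  shows "potential_bound k d e c s (Node i \<xi> l rt) A r"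
  using assms by (simp add: potential_bound_def damaged_centers_Node_right)

lemma potential_bound_Node_cut:
  assumes "0 \<le> e" "0 \<le> s"
    and cut: "e * real (card (Fset k d e c A))
      \<le> 2 * real (card {j \<in> Fset k d e c A. cut_damages d e i \<xi> (c j)})"
    and left: "potential_bound k d e c s l (A \<inter> {y. y i \<le> \<xi>}) r"
    and right: "potential_bound k d e c s rt (A \<inter> {y. \<xi> < y i}) r"
  shows "potential_bound k d e c s (Node i \<xi> l rt) A (Suc r)"
proof -
  have split: "real (card (Fset k d e c (A \<inter> {y. y i \<le> \<xi>})))
      + real (card (Fset k d e c (A \<inter> {y. \<xi> < y i})))
      + real (card {j \<in> Fset k d e c A. cut_damages d e i \<xi> (c j)}) = real (card (Fset k d e c A))"
    by (simp only: of_nat_add[symmetric] card_Fset_cut)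
  have damaged: "real (card {j \<in> Fset k d e c A. cut_damages d e i \<xi> (c j)})
      + real (card (damaged_centers k d e c l (A \<inter> {y. y i \<le> \<xi>})))
      + real (card (damaged_centers k d e c rt (A \<inter> {y. \<xi> < y i})))
      \<le> real (card (damaged_centers k d e c (Node i \<xi> l rt) A))"
    using card_damaged_centers_Node by (simp only: of_nat_add[symmetric] of_nat_le_iff)
  show ?thesis
    using left right unfolding potential_bound_def
    by (intro potential_arith_step[OF assms(1,2) _ cut split damaged]) simp_all
qed

definition robust_cuts ::
    "nat \<Rightarrow> nat \<Rightarrow> real \<Rightarrow> (nat \<Rightarrow> point) \<Rightarrow> point set \<Rightarrow> real \<Rightarrow> real \<Rightarrow> bool" where
  "robust_cuts k d e c X s B \<longleftrightarrow> (\<forall>p. valid_path d p \<and> real (length p) \<le> B \<longrightarrow>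
       real (card (Fset k d e c (ucell p))) \<le> s
     \<or> (\<forall>i \<xi>. i < d \<and> (\<exists>x\<in>X \<inter> ucell p. \<exists>y\<in>X \<inter> ucell p. separates i \<xi> x y)
         \<longrightarrow> real (card {j\<in>Fset k d e c (ucell p). cut_damages d e i \<xi> (c j)})
               \<ge> e * real (card (Fset k d e c (ucell p))) / 2))"

lemma robust_cuts_damage:
  assumes "robust_cuts k d e c X s B"
    and centers: "\<forall>i<k. c i \<in> X \<and> shift d e (c i) \<in> X \<and> shift d (-e) (c i) \<in> X"
    and "valid_path d p" "real (length p) \<le> B" "s < real (card (Fset k d e c (X \<inter> ucell p)))"
    and "i < d" "\<exists>x\<in>X \<inter> ucell p. \<exists>y\<in>X \<inter> ucell p. separates i \<xi> x y"
  shows "e * real (card (Fset k d e c (X \<inter> ucell p)))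
    \<le> 2 * real (card {j \<in> Fset k d e c (X \<inter> ucell p). cut_damages d e i \<xi> (c j)})"
proof -
  have "e * real (card (Fset k d e c (ucell p))) / 2
      \<le> real (card {j \<in> Fset k d e c (ucell p). cut_damages d e i \<xi> (c j)})"
    using assms unfolding robust_cuts_def Fset_Int_eq[OF centers] by force
  then show ?thesis
    unfolding Fset_Int_eq[OF centers] by simp
qed

text \<open>Cells are intersected with the data set \<open>X\<close>: a cut that leaves all data on one side
  shrinks the cell without using up any of the path length budget \<open>B\<close>.\<close>

lemma potential_bound_tree:
  fixes e s B :: real
  assumes "0 \<le> e" "1 \<le> s"
    and centers: "\<forall>i<k. c i \<in> X \<and> shift d e (c i) \<in> X \<and> shift d (-e) (c i) \<in> X"
    and robust: "robust_cuts k d e c X s B"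
    and "wf_tree d t"
    and "\<forall>q\<in>leaf_paths t. card (Fset k d e c (X \<inter> ucell p \<inter> ucell q)) \<le> 1"
    and "valid_path d p" "real (length p + r) \<le> B"
  shows "potential_bound k d e c s t (X \<inter> ucell p) r"
  using assms(5-)
proof (induction t arbitrary: p r)
  case Leaf
  then show ?case
    using assms(1,2) by (intro potential_bound_small_cell) auto
next
  case (Node i \<xi> l rt)
  let ?A = "X \<inter> ucell p"
  have "i < d" "wf_tree d l" "wf_tree d rt"
    using Node.prems(1) by auto
  have leaves:
    "\<forall>q\<in>leaf_paths l. card (Fset k d e c (X \<inter> ucell (p @ [(i, \<xi>, -1)]) \<inter> ucell q)) \<le> 1"
    "\<forall>q\<in>leaf_paths rt. card (Fset k d e c (X \<inter> ucell (p @ [(i, \<xi>, 1)]) \<inter> ucell q)) \<le> 1"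
    using Node.prems(2) unfolding Int_ucell_snoc Int_ucell_Cons[symmetric] by simp_all
  show ?case
  proof (cases "real (card (Fset k d e c ?A)) \<le> s")
    case True
    with assms(1) show ?thesis
      by (rule potential_bound_small_cell)
  next
    case large: False
    show ?thesis
    proof (cases "\<exists>x\<in>?A. \<exists>y\<in>?A. separates i \<xi> x y")
      case False
      then have "?A \<subseteq> {y. y i \<le> \<xi>} \<or> ?A \<subseteq> {y. \<xi> < y i}"
        by (rule unseparated_cases)
      then show ?thesis
      proof
        assume left: "?A \<subseteq> {y. y i \<le> \<xi>}"
        then have "potential_bound k d e c s l ?A r"
          using Node.IH(1)[OF \<open>wf_tree d l\<close> _ Node.prems(3,4)] leaves(1)
          by (simp add: Int_ucell_snoc Int_absorb2)
        with left show ?thesis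
          by (rule potential_bound_Node_left)
      next
        assume right: "?A \<subseteq> {y. \<xi> < y i}"
        then have "potential_bound k d e c s rt ?A r"
          using Node.IH(2)[OF \<open>wf_tree d rt\<close> _ Node.prems(3,4)] leaves(2)
          by (simp add: Int_ucell_snoc Int_absorb2)
        with right show ?thesis
          by (rule potential_bound_Node_right)
      qed
    next
      case separated: True
      show ?thesis
      proof (cases r)
        case 0
        then show ?thesis
          by (simp add: potential_bound_0)
      next
        case (Suc r')
        have "valid_path d (p @ [(i, \<xi>, l')])" "real (length (p @ [(i, \<xi>, l')]) + r') \<le> B"
          if "l' = -1 \<or> l' = 1" for l'
          using Node.prems(3,4) Suc \<open>i < d\<close> that by (auto simp: valid_path_def)
        then have "potential_bound k d e c s l (?A \<inter> {y. y i \<le> \<xi>}) r'"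
          "potential_bound k d e c s rt (?A \<inter> {y. \<xi> < y i}) r'"
          using Node.IH(1)[OF \<open>wf_tree d l\<close> leaves(1)] Node.IH(2)[OF \<open>wf_tree d rt\<close> leaves(2)]
          unfolding Int_ucell_snoc by auto
        moreover have "e * real (card (Fset k d e c ?A))
            \<le> 2 * real (card {j \<in> Fset k d e c ?A. cut_damages d e i \<xi> (c j)})"
          using robust_cuts_damage[OF robust centers Node.prems(3) _ _ \<open>i < d\<close> separated]
            Node.prems(4) large by simp
        ultimately show ?thesis
          unfolding Suc using assms(1,2) by (intro potential_bound_Node_cut) auto
      qed
    qed
  qed
qed

lemma centers_in_data:
  assumes "1 < k" "i < k"
  shows "c i \<in># data k d e c \<and> shift d e (c i) \<in># data k d e c \<and> shift d (-e) (c i) \<in># data k d e c"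
proof -
  have "0 < ln (real k) ^ 3"
    using assms(1) by simp
  then have "0 < k ^ 2 * nat \<lceil>ln (real k) ^ 3\<rceil>"
    using assms(1) by simp
  then show ?thesis
    using assms(2) by (auto simp: data_def set_mset_sum)
qed

lemma log16_bounds:
  fixes k :: nat
  assumes "256 \<le> k"
  obtains R :: nat where "2 \<le> R" "real (4 * R) \<le> log 2 k" "4 * 2 ^ R * sqrt k \<le> k"
    "real_of_int \<lceil>ln k\<rceil> < 4 * real R + 5"
proof -
  obtain R where R: "16 ^ R \<le> k" "k < 16 ^ (R + 1)"
    using ex_power_ivl1[of 16 k] assms by auto
  have "(16::nat) ^ 2 < 16 ^ (R + 1)"
    using R(2) assms by simp
  then have "2 \<le> R"
    by (subst (asm) power_strict_increasing_iff) auto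
  have pow: "(2::real) ^ (4 * R) \<le> k"
    using R(1) by (simp add: power_mult flip: of_nat_le_iff)
  then have "real (4 * R) \<le> log 2 k"
    by (rule le_log_of_power) simp
  have "(4::real) \<le> 2 ^ R"
    using power_increasing[OF \<open>2 \<le> R\<close>, of "2::real"] by simp
  then have "4 * 2 ^ R \<le> (2::real) ^ R * 2 ^ R"
    by simp
  also have "\<dots> = sqrt ((2::real) ^ (4 * R))"
    by (simp add: power_mult power_mult_distrib[symmetric] real_sqrt_power flip: power_add mult_2)
  also have "\<dots> \<le> sqrt k"
    using pow by simp
  finally have "4 * 2 ^ R * sqrt k \<le> sqrt k * sqrt k"
    by (rule mult_right_mono) simp
  then have "4 * 2 ^ R * sqrt k \<le> k"
    by simp
  have "real k < 16 ^ (R + 1)"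
    using R(2) by (metis of_nat_less_iff of_nat_numeral of_nat_power)
  then have "ln k < ln (16 ^ (R + 1))"
    using assms by simp
  also have "\<dots> = real (R + 1) * ln 16"
    by (simp only: ln_realpow)
  also have "\<dots> = real (R + 1) * (4 * ln 2)"
    using ln_realpow[of 2 4] by simp
  also have "\<dots> < real (R + 1) * 4"
    using ln_2_less_1 by (intro mult_strict_left_mono) auto
  finally have "ln k < 4 * real R + 4"
    by simp
  then have "real_of_int \<lceil>ln k\<rceil> < 4 * real R + 5"
    using ceiling_correct[of "ln k"] by linarith
  with \<open>2 \<le> R\<close> \<open>real (4 * R) \<le> log 2 k\<close> \<open>4 * 2 ^ R * sqrt k \<le> k\<close> show ?thesis
    using that by blast
qed

lemma potential_forces_damage:
  fixes e \<delta> C K D :: real and R :: nat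
  assumes "0 < C" "e = 50 * \<delta> / C" "0 < \<delta>" "\<delta> < 1/100" "C < 4 * R + 5" "1 \<le> R"
    and "0 \<le> K" "4 * 2 ^ R * sqrt K \<le> K"
    and potential: "e * (R * K - (2 ^ R - 1) * sqrt K) \<le> (2 + e * R) * D"
  shows "2 * \<delta> * K \<le> D"
proof (rule ccontr)
  assume "\<not> 2 * \<delta> * K \<le> D"
  have "0 < e"
    using assms(1-3) by simp
  have \<delta>: "\<delta> = e * C / 50"
    using assms(1,2) by simp
  have "0 \<le> e * R * K"
    using \<open>0 < e\<close> \<open>0 \<le> K\<close> by simp
  then have "2 * \<delta> * (e * R * K) \<le> 2 * (1/100) * (e * R * K)"
    using \<open>\<delta> < 1/100\<close> by (intro mult_right_mono) auto
  then have "(2 + e * R) * (2 * \<delta> * K) \<le> e * K * (4 * C / 50 + R / 50)"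
    by (simp add: \<delta> algebra_simps)
  also have "\<dots> \<le> e * K * (R - 1/4)"
    using \<open>0 < e\<close> \<open>0 \<le> K\<close> assms(5,6) by (intro mult_left_mono) auto
  also have "\<dots> \<le> e * (R * K - (2 ^ R - 1) * sqrt K)"
  proof -
    have "(2 ^ R - 1) * sqrt K \<le> 2 ^ R * sqrt K"
      using \<open>0 \<le> K\<close> by (simp add: algebra_simps)
    also have "\<dots> \<le> K / 4"
      using assms(8) by simp
    finally have "e * (R * K - K / 4) \<le> e * (R * K - (2 ^ R - 1) * sqrt K)"
      using \<open>0 < e\<close> by (intro mult_left_mono) auto
    moreover have "e * K * (R - 1/4) = e * (R * K - K / 4)"
      by (simp add: algebra_simps)
    ultimately show ?thesis
      by linarith
  qed
  also have "\<dots> \<le> (2 + e * R) * D"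
    by (rule potential)
  also have "\<dots> < (2 + e * R) * (2 * \<delta> * K)"
    using \<open>\<not> 2 * \<delta> * K \<le> D\<close> \<open>0 < e\<close> by (intro mult_strict_left_mono) (auto intro: add_pos_nonneg)
  finally show False
    by simp
qed

theorem lemma10:
  fixes k d :: nat and \<delta> \<epsilon> :: real and c :: "nat \<Rightarrow> point"
  assumes hk: "k > 500"
    and hdelta1: "(ln (real k))^3 / sqrt (real k) < \<delta>" and hdelta2: "\<delta> < 1/100"
    and hd: "d = 300 * nat \<lceil>ln (real k)\<rceil>"
    and heps: "\<epsilon> = 50 * \<delta> / real_of_int \<lceil>ln (real k)\<rceil>"
    and hgrid: "\<forall>i<k. c i \<in> grid d \<epsilon>"
    and hsep: "\<forall>i<k. \<forall>j<k. i \<noteq> j \<longrightarrow> dist2 d (c i) (c j) \<ge> sqrt (real d) / 5"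
    and hpath: "\<forall>p. valid_path d p \<and> real (length p) \<le> log 2 (real k) / 4 \<longrightarrow>
         real (card (Fset k d \<epsilon> c (ucell p))) \<le> sqrt (real k)
       \<or> (\<forall>i \<xi>. i < d \<and>
             (\<exists>x\<in>set_mset (data k d \<epsilon> c) \<inter> ucell p. \<exists>y\<in>set_mset (data k d \<epsilon> c) \<inter> ucell p.
                 separates i \<xi> x y)
           \<longrightarrow> real (card {j\<in>Fset k d \<epsilon> c (ucell p). cut_damages d \<epsilon> i \<xi> (c j)})
                 \<ge> \<epsilon> * real (card (Fset k d \<epsilon> c (ucell p))) / 2)"
  shows "\<forall>t. wf_tree d t \<and> (\<forall>L\<in>leaf_cells t. card {i. i < k \<and> c i \<in> L} \<le> 1) \<longrightarrow>
           real (card {i. i < k \<and> tree_damaged d \<epsilon> t (c i)}) \<ge> 2 * \<delta> * real k"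
proof (intro allI impI)
  fix t
  assume tree: "wf_tree d t \<and> (\<forall>L\<in>leaf_cells t. card {i. i < k \<and> c i \<in> L} \<le> 1)"
  let ?X = "set_mset (data k d \<epsilon> c)" and ?C = "real_of_int \<lceil>ln (real k)\<rceil>"
  have "0 < (ln (real k)) ^ 3 / sqrt (real k)"
    using hk by simp
  with hdelta1 have "0 < \<delta>"
    by linarith
  have "0 < ?C"
    using hk by simp
  with \<open>0 < \<delta>\<close> have "0 \<le> \<epsilon>"
    by (simp add: heps)
  have centers: "\<forall>i<k. c i \<in> ?X \<and> shift d \<epsilon> (c i) \<in> ?X \<and> shift d (-\<epsilon>) (c i) \<in> ?X"
    using centers_in_data[of k] hk by auto
  obtain R where R: "2 \<le> R" "real (4 * R) \<le> log 2 k" "4 * 2 ^ R * sqrt k \<le> k" "?C < 4 * real R + 5"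
    using log16_bounds[of k] hk by auto
  have "\<forall>q\<in>leaf_paths t. card (Fset k d \<epsilon> c (?X \<inter> ucell [] \<inter> ucell q)) \<le> 1"
    using tree card_Fset_le[of k d \<epsilon> c] Fset_Int_eq[OF centers]
    by (auto simp: leaf_cells_def) (meson le_trans)
  moreover have "robust_cuts k d \<epsilon> c ?X (sqrt k) (log 2 k / 4)"
    using hpath unfolding robust_cuts_def .
  ultimately have "potential_bound k d \<epsilon> c (sqrt k) t (?X \<inter> ucell []) R"
    using tree hk R(2)
    by (intro potential_bound_tree[OF \<open>0 \<le> \<epsilon>\<close> _ centers]) (auto simp: valid_path_def)
  moreover have "Fset k d \<epsilon> c ?X = {..<k}"
    using centers by (auto simp: Fset_eq)
  ultimately have "2 * \<delta> * real k \<le> real (card (damaged_centers k d \<epsilon> c t ?X))"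
    using \<open>0 < ?C\<close> \<open>0 < \<delta>\<close> hdelta2 R(1,3,4) unfolding potential_bound_def
    by (intro potential_forces_damage[OF _ heps]) auto
  also have "\<dots> \<le> real (card {i. i < k \<and> tree_damaged d \<epsilon> t (c i)})"
    using damaged_centers_subset_tree_damaged[OF centers] by (simp add: card_mono)
  finally show "real (card {i. i < k \<and> tree_damaged d \<epsilon> t (c i)}) \<ge> 2 * \<delta> * real k" .
qed

end
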